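(* Let $n\ge3$, let $H$ be a non-trivial finitely generated abelian group, let $G$ be a non-trivial group with a surjective homomorphism $\sigma\colon G\to S_n$, and let $W=H\wr_\sigma G=H^n\rtimes_\sigma G$. Assume that every abelian normal subgroup of $W$ is contained in $H^n$. Then $H^n$ is a characteristic subgroup of $W$.
   Context: $H\wr_\sigma G=H^n\rtimes_\sigma G$ is the semidirect product in which $G$ acts on $H^n$ by permuting coordinates through $\sigma$: $g\cdot(h_1,\dots,h_n)=(h_{\sigma(g)(1)},\dots,h_{\sigma(g)(n)})$ (with the composition convention in $S_n$ making this a left action); elements are pairs $(\mathbf h,g)$ with $(\mathbf h,g)(\mathbf k,x)=(\mathbf h\cdot g\mathbf k,gx)$, and $H^n$ is identified with $\{(\mathbf h,1)\}$. *)

theory Defs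
  imports "HOL-Algebra.Algebra"
begin

text \<open>Symmetric group on {1..n} with the composition convention (p q)(i) = q (p i),
  i.e. "first p, then q".  With this convention the coordinate permutation
  g.(h_1,...,h_n) = (h_{sigma(g)(1)},...,h_{sigma(g)(n)}) is a left action.\<close>
definition sym_group_rc :: "nat \<Rightarrow> (nat \<Rightarrow> nat) monoid" where
  "sym_group_rc n = \<lparr> carrier = { p. p permutes {1..n} }, monoid.mult = (\<lambda>p q. q \<circ> p), one = id \<rparr>"

definition wreath_prod ::
  "('h, 'a) monoid_scheme \<Rightarrow> ('g, 'b) monoid_scheme \<Rightarrow> nat \<Rightarrow> ('g \<Rightarrow> nat \<Rightarrow> nat)
     \<Rightarrow> ((nat \<Rightarrow> 'h) \<times> 'g) monoid" where
  "wreath_prod H G n \<sigma> = \<lparr>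
     carrier = ({1..n} \<rightarrow>\<^sub>E carrier H) \<times> carrier G,
     monoid.mult = (\<lambda>(h, g) (k, x). ((\<lambda>i\<in>{1..n}. h i \<otimes>\<^bsub>H\<^esub> k (\<sigma> g i)), g \<otimes>\<^bsub>G\<^esub> x)),
     one = ((\<lambda>i\<in>{1..n}. \<one>\<^bsub>H\<^esub>), \<one>\<^bsub>G\<^esub>) \<rparr>"

definition wreath_base ::
  "('h, 'a) monoid_scheme \<Rightarrow> ('g, 'b) monoid_scheme \<Rightarrow> nat \<Rightarrow> ((nat \<Rightarrow> 'h) \<times> 'g) set" where
  "wreath_base H G n = ({1..n} \<rightarrow>\<^sub>E carrier H) \<times> {\<one>\<^bsub>G\<^esub>}"

definition characteristic :: "'a set \<Rightarrow> ('a, 'b) monoid_scheme \<Rightarrow> bool" where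
  "characteristic K W \<longleftrightarrow> subgroup K W \<and> (\<forall>\<phi> \<in> iso W W. \<phi> ` K = K)"

definition finitely_generated :: "('a, 'b) monoid_scheme \<Rightarrow> bool" where
  "finitely_generated H \<longleftrightarrow> (\<exists>S. finite S \<and> S \<subseteq> carrier H \<and> generate H S = carrier H)"

end

theory Submission
  imports Defs
begin

text \<open>The base \<open>H\<^sup>n\<close> is the kernel of the projection \<open>W \<rightarrow> G\<close>, hence normal, and it is
  abelian because \<open>H\<close> is. An automorphism of \<open>W\<close> maps abelian normal subgroups to abelian
  normal subgroups, so by hypothesis it maps \<open>H\<^sup>n\<close> into \<open>H\<^sup>n\<close>; applied to the inverse
  automorphism this gives equality.\<close>

lemma group_sym_group_rc: "group (sym_group_rc n)"
proof (rule groupI)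
  fix p assume "p \<in> carrier (sym_group_rc n)"
  then have p: "p permutes {1..n}" by (simp add: sym_group_rc_def)
  have "inv_into UNIV p permutes {1..n}" and "p \<circ> inv_into UNIV p = id"
    using permutes_inv[OF p] permutes_inv_o(1)[OF p] by auto
  then show "\<exists>q\<in>carrier (sym_group_rc n). q \<otimes>\<^bsub>sym_group_rc n\<^esub> p = \<one>\<^bsub>sym_group_rc n\<^esub>"
    by (auto simp: sym_group_rc_def)
qed (auto simp: sym_group_rc_def permutes_compose permutes_id o_assoc)

lemma hom_sym_group_rc:
  assumes G: "group G" and \<sigma>: "\<sigma> \<in> hom G (sym_group_rc n)"
  shows hom_sym_group_rc_permutes: "g \<in> carrier G \<Longrightarrow> \<sigma> g permutes {1..n}"
    and hom_sym_group_rc_mult: "\<lbrakk>x \<in> carrier G; y \<in> carrier G\<rbrakk> \<Longrightarrow> \<sigma> (x \<otimes>\<^bsub>G\<^esub> y) = \<sigma> y \<circ> \<sigma> x"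
    and hom_sym_group_rc_one: "\<sigma> \<one>\<^bsub>G\<^esub> = id"
proof -
  show "g \<in> carrier G \<Longrightarrow> \<sigma> g permutes {1..n}"
    using \<sigma> by (auto simp: hom_def sym_group_rc_def)
  show "\<lbrakk>x \<in> carrier G; y \<in> carrier G\<rbrakk> \<Longrightarrow> \<sigma> (x \<otimes>\<^bsub>G\<^esub> y) = \<sigma> y \<circ> \<sigma> x"
    using \<sigma> by (auto simp: hom_def sym_group_rc_def)
  have "group_hom G (sym_group_rc n) \<sigma>"
    using G \<sigma> group_sym_group_rc by (simp add: group_hom_def group_hom_axioms_def)
  then show "\<sigma> \<one>\<^bsub>G\<^esub> = id"
    using group_hom.hom_one by (fastforce simp: sym_group_rc_def)
qed

lemma group_wreath_prod:
  assumes H: "group H" and G: "group G" and \<sigma>: "\<sigma> \<in> hom G (sym_group_rc n)"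
  shows "group (wreath_prod H G n \<sigma>)"
proof -
  interpret H: group H by fact
  interpret G: group G by fact
  note mult = hom_sym_group_rc_mult[OF G \<sigma>] and one = hom_sym_group_rc_one[OF G \<sigma>]
  have in_range: "Suc 0 \<le> \<sigma> g i" "\<sigma> g i \<le> n" if "g \<in> carrier G" "Suc 0 \<le> i" "i \<le> n" for g i
    using permutes_in_image[OF hom_sym_group_rc_permutes[OF G \<sigma> that(1)], of i] that by auto
  show ?thesis
  proof (rule groupI)
    fix x assume x: "x \<in> carrier (wreath_prod H G n \<sigma>)"
    then obtain k g where kg: "x = (k, g)" "k \<in> {1..n} \<rightarrow>\<^sub>E carrier H" "g \<in> carrier G"
      by (auto simp: wreath_prod_def)
    define y where "y = ((\<lambda>i\<in>{1..n}. inv\<^bsub>H\<^esub> k (\<sigma> (inv\<^bsub>G\<^esub> g) i)), inv\<^bsub>G\<^esub> g)"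
    have "y \<in> carrier (wreath_prod H G n \<sigma>)"
      using kg by (auto simp: y_def wreath_prod_def PiE_def Pi_def in_range)
    moreover have "y \<otimes>\<^bsub>wreath_prod H G n \<sigma>\<^esub> x = \<one>\<^bsub>wreath_prod H G n \<sigma>\<^esub>"
      using kg by (auto simp: y_def wreath_prod_def PiE_def Pi_def in_range mult one intro!: ext)
    ultimately show "\<exists>y\<in>carrier (wreath_prod H G n \<sigma>).
        y \<otimes>\<^bsub>wreath_prod H G n \<sigma>\<^esub> x = \<one>\<^bsub>wreath_prod H G n \<sigma>\<^esub>"
      by blast
  qed (auto simp: wreath_prod_def PiE_def Pi_def extensional_def in_range mult one
         G.m_assoc H.m_assoc intro!: ext)
qed

lemma wreath_base_normal:
  assumes H: "group H" and G: "group G" and \<sigma>: "\<sigma> \<in> hom G (sym_group_rc n)"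
  shows "wreath_base H G n \<lhd> wreath_prod H G n \<sigma>"
proof -
  have "group_hom (wreath_prod H G n \<sigma>) G snd"
    using group_wreath_prod[OF assms] G
    by (auto simp: group_hom_def group_hom_axioms_def hom_def wreath_prod_def)
  moreover have "kernel (wreath_prod H G n \<sigma>) G snd = wreath_base H G n"
    using group.is_monoid[OF G] by (auto simp: kernel_def wreath_prod_def wreath_base_def)
  ultimately show ?thesis
    using group_hom.normal_kernel by fastforce
qed

lemma comm_group_wreath_base:
  assumes H: "comm_group H" and G: "group G" and \<sigma>: "\<sigma> \<in> hom G (sym_group_rc n)"
  shows "comm_group ((wreath_prod H G n \<sigma>)\<lparr>carrier := wreath_base H G n\<rparr>)"
proof -
  interpret H: comm_group H by fact
  have "subgroup (wreath_base H G n) (wreath_prod H G n \<sigma>)"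
    using wreath_base_normal[OF H.group_axioms G \<sigma>] normal_imp_subgroup by blast
  then have "group ((wreath_prod H G n \<sigma>)\<lparr>carrier := wreath_base H G n\<rparr>)"
    using group.subgroup_imp_group[OF group_wreath_prod[OF H.group_axioms G \<sigma>]] by blast
  then show ?thesis
    by (rule group.group_comm_groupI)
      (auto simp: wreath_base_def wreath_prod_def hom_sym_group_rc_one[OF G \<sigma>] H.m_comm
         PiE_def Pi_def intro!: ext)
qed

lemma iso_image_abelian_normal:
  assumes W: "group W" and N: "N \<lhd> W" and N_comm: "comm_group (W\<lparr>carrier := N\<rparr>)"
    and \<phi>: "\<phi> \<in> iso W W"
  shows "\<phi> ` N \<lhd> W" and "comm_group (W\<lparr>carrier := \<phi> ` N\<rparr>)"
proof -
  show \<phi>N: "\<phi> ` N \<lhd> W"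
    using iso_normal_subgroup[OF \<phi> W W N] .
  have N_sub: "N \<subseteq> carrier W"
    using N normal_imp_subgroup subgroup.subset by blast
  have \<phi>_mult: "\<phi> (a \<otimes>\<^bsub>W\<^esub> b) = \<phi> a \<otimes>\<^bsub>W\<^esub> \<phi> b" if "a \<in> N" "b \<in> N" for a b
    using \<phi> N_sub that by (auto simp: iso_def hom_def)
  have "group (W\<lparr>carrier := \<phi> ` N\<rparr>)"
    using group.subgroup_imp_group[OF W normal_imp_subgroup[OF \<phi>N]] .
  then show "comm_group (W\<lparr>carrier := \<phi> ` N\<rparr>)"
  proof (rule group.group_comm_groupI)
    fix x y assume "x \<in> carrier (W\<lparr>carrier := \<phi> ` N\<rparr>)" "y \<in> carrier (W\<lparr>carrier := \<phi> ` N\<rparr>)"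
    then obtain a b where ab: "a \<in> N" "b \<in> N" "x = \<phi> a" "y = \<phi> b" by auto
    have "\<phi> a \<otimes>\<^bsub>W\<^esub> \<phi> b = \<phi> (a \<otimes>\<^bsub>W\<^esub> b)"
      using \<phi>_mult ab by simp
    also have "\<dots> = \<phi> (b \<otimes>\<^bsub>W\<^esub> a)"
      using comm_monoid.m_comm[OF comm_group.axioms(1)[OF N_comm]] ab by fastforce
    also have "\<dots> = \<phi> b \<otimes>\<^bsub>W\<^esub> \<phi> a"
      using \<phi>_mult ab by simp
    finally show "x \<otimes>\<^bsub>W\<lparr>carrier := \<phi> ` N\<rparr>\<^esub> y = y \<otimes>\<^bsub>W\<lparr>carrier := \<phi> ` N\<rparr>\<^esub> x"
      using ab by simp
  qed
qed

lemma characteristicI: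
  assumes W: "group W" and K: "subgroup K W"
    and into: "\<And>\<phi>. \<phi> \<in> iso W W \<Longrightarrow> \<phi> ` K \<subseteq> K"
  shows "characteristic K W"
proof -
  have "K \<subseteq> \<phi> ` K" if \<phi>: "\<phi> \<in> iso W W" for \<phi>
  proof
    fix k assume k: "k \<in> K"
    let ?\<psi> = "inv_into (carrier W) \<phi>"
    have "?\<psi> k \<in> K"
      using into[OF group.iso_set_sym[OF W \<phi>]] k by blast
    moreover have "\<phi> (?\<psi> k) = k"
      using \<phi> k subgroup.subset[OF K] by (auto simp: iso_def bij_betw_def intro!: f_inv_into_f)
    ultimately show "k \<in> \<phi> ` K"
      by (metis image_eqI)
  qed
  then show ?thesis
    using K into by (simp add: characteristic_def subset_antisym)
qed

lemma characteristic_if_contains_abelian_normal: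
  assumes W: "group W" and N: "N \<lhd> W" and N_comm: "comm_group (W\<lparr>carrier := N\<rparr>)"
    and contains: "\<And>A. A \<lhd> W \<Longrightarrow> comm_group (W\<lparr>carrier := A\<rparr>) \<Longrightarrow> A \<subseteq> N"
  shows "characteristic N W"
  using characteristicI[OF W normal_imp_subgroup[OF N]]
    contains iso_image_abelian_normal[OF W N N_comm] by blast

theorem theorem3p10:
  fixes H :: "('h, 'a) monoid_scheme" and G :: "('g, 'b) monoid_scheme"
    and n :: nat and \<sigma> :: "'g \<Rightarrow> nat \<Rightarrow> nat"
  assumes n3: "n \<ge> 3"
    and H_ab: "comm_group H" and H_fg: "finitely_generated H"
    and H_nontriv: "carrier H \<noteq> {\<one>\<^bsub>H\<^esub>}"
    and G_grp: "group G" and G_nontriv: "carrier G \<noteq> {\<one>\<^bsub>G\<^esub>}"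
    and \<sigma>_hom: "\<sigma> \<in> hom G (sym_group_rc n)"
    and \<sigma>_surj: "\<sigma> ` carrier G = carrier (sym_group_rc n)"
    and ab_normal: "\<And>A. A \<lhd> wreath_prod H G n \<sigma> \<Longrightarrow>
                         comm_group ((wreath_prod H G n \<sigma>)\<lparr>carrier := A\<rparr>) \<Longrightarrow>
                         A \<subseteq> wreath_base H G n"
  shows "characteristic (wreath_base H G n) (wreath_prod H G n \<sigma>)"
proof -
  have H: "group H"
    using H_ab comm_group.axioms(2) by blast
  show ?thesis
  proof (rule characteristic_if_contains_abelian_normal)
    show "group (wreath_prod H G n \<sigma>)"
      using group_wreath_prod[OF H G_grp \<sigma>_hom] .
    show "wreath_base H G n \<lhd> wreath_prod H G n \<sigma>"
      using wreath_base_normal[OF H G_grp \<sigma>_hom] .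
    show "comm_group ((wreath_prod H G n \<sigma>)\<lparr>carrier := wreath_base H G n\<rparr>)"
      using comm_group_wreath_base[OF H_ab G_grp \<sigma>_hom] .
  qed (rule ab_normal)
qed

end
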